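(* Let $M>0$ and $\alpha>0$. There exist $\varepsilon_0>0$ and $l\in\mathbb N$ such that the following holds. Let $\varepsilon<\varepsilon_0$, $S\in\mathcal A(M,\varepsilon,\alpha)$, and let $T=\phi(j_1,\dots,j_m)(L)$ be an $m$-block of $C_S$. Let $F:T\to L$ be a $C^1$ map with nonvanishing derivative and $\mathcal N(F)<1/2$, such that $F$ maps each connected component of $T\setminus C_S$ onto a connected component of $L\setminus C_S$, and suppose there is a gap $\phi(j_1,\dots,j_m,i_1,\dots,i_p)(J_i)\subset T$ of level $m+p$ with $F\big(\phi(j_1,\dots,j_m,i_1,\dots,i_p)(J_i)\big)=J_j$ for some $1\le i,j\le k-1$. Then $p\le l$.
   Context: Setting: $k\ge2$; $I_1,\dots,I_k$ pairwise disjoint compact intervals in $[0,1)$ ordered left to right; $L\subset[0,1)$ compact interval containing $I=I_1\cup\dots\cup I_k$. $\mathcal S^{r}(I_1,\dots,I_k,L)$: $C^r$ maps $S:I\to L$ with $S(I_j)=L$ for all $j$ and $|S'|>1$; $C_S=\{x\in I:S^n(x)\in I\ \forall n\ge1\}$. For a $C^1$ map $F$ with nonvanishing derivative on an interval $T$, $\mathcal N(F)=\sup_{x,y\in T}\log\frac{|F'(x)|}{|F'(y)|}$; for $S$, $\mathcal N(S)=\max_j\sup_{x,y\in I_j}\log\frac{|S'(x)|}{|S'(y)|}$. $\mathcal A(M,\varepsilon,\alpha)$ is the set of $S\in\mathcal S^{1+\alpha}(I_1,\dots,I_k,L)$ with $\mathcal N(S)<\varepsilon$ and $|\log\frac{|S'(x)|}{|S'(y)|}|\le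 M|x-y|^\alpha$ for $x,y$ in a common $I_j$. Inverse branches $\phi_i=(S|_{I_i})^{-1}$, $\phi(i_1,\dots,i_m)=\phi_{i_1}\circ\dots\circ\phi_{i_m}$; $\phi(i_1,\dots,i_m)(L)$ is an $m$-block. $J_i$ ($1\le i\le k-1$) is the open interval between $I_i$ and $I_{i+1}$; $\phi(i_1,\dots,i_r)(J_i)$ is a gap of level $r$. *)

theory Defs
  imports "HOL-Analysis.Analysis"
begin

text \<open>Standing setting: k \<ge> 2 intervals I_j = {a j..b j} (j = 1..k), ordered left to right
  and pairwise disjoint, all in L = {c..d} \<subseteq> [0,1).\<close>
definition setting :: "nat \<Rightarrow> (nat \<Rightarrow> real) \<Rightarrow> (nat \<Rightarrow> real) \<Rightarrow> real \<Rightarrow> real \<Rightarrow> bool" where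
  "setting k a b c d \<longleftrightarrow> k \<ge> 2 \<and> (\<forall>j\<in>{1..k}. a j \<le> b j) \<and>
     (\<forall>j\<in>{1..<k}. b j < a (Suc j)) \<and> 0 \<le> c \<and> c \<le> d \<and> d < 1 \<and>
     (\<forall>j\<in>{1..k}. {a j..b j} \<subseteq> {c..d})"

definition Iset :: "nat \<Rightarrow> (nat \<Rightarrow> real) \<Rightarrow> (nat \<Rightarrow> real) \<Rightarrow> real set" where
  "Iset k a b = (\<Union>j\<in>{1..k}. {a j..b j})"

definition C1_on :: "real set \<Rightarrow> (real \<Rightarrow> real) \<Rightarrow> (real \<Rightarrow> real) \<Rightarrow> bool" where
  "C1_on T F F' \<longleftrightarrow> (\<forall>x\<in>T. (F has_real_derivative F' x) (at x within T)) \<and> continuous_on T F'"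

definition holder_on :: "real \<Rightarrow> real set \<Rightarrow> (real \<Rightarrow> real) \<Rightarrow> bool" where
  "holder_on \<alpha> T g \<longleftrightarrow> (\<exists>H. \<forall>x\<in>T. \<forall>y\<in>T. \<bar>g x - g y\<bar> \<le> H * \<bar>x - y\<bar> powr \<alpha>)"

definition in_S_class :: "nat \<Rightarrow> (nat \<Rightarrow> real) \<Rightarrow> (nat \<Rightarrow> real) \<Rightarrow> real \<Rightarrow> real \<Rightarrow> real
    \<Rightarrow> (real \<Rightarrow> real) \<Rightarrow> (real \<Rightarrow> real) \<Rightarrow> bool" where
  "in_S_class k a b c d \<alpha> S S' \<longleftrightarrow>
     (\<forall>j\<in>{1..k}. C1_on {a j..b j} S S' \<and> holder_on \<alpha> {a j..b j} S' \<and> S ` {a j..b j} = {c..d}) \<and>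
     (\<forall>x\<in>Iset k a b. \<bar>S' x\<bar> > 1)"

definition distortion :: "real set \<Rightarrow> (real \<Rightarrow> real) \<Rightarrow> real" where
  "distortion T F' = (SUP x\<in>T. SUP y\<in>T. ln (\<bar>F' x\<bar> / \<bar>F' y\<bar>))"

definition NS :: "nat \<Rightarrow> (nat \<Rightarrow> real) \<Rightarrow> (nat \<Rightarrow> real) \<Rightarrow> (real \<Rightarrow> real) \<Rightarrow> real" where
  "NS k a b S' = Max ((\<lambda>j. distortion {a j..b j} S') ` {1..k})"

definition in_A :: "nat \<Rightarrow> (nat \<Rightarrow> real) \<Rightarrow> (nat \<Rightarrow> real) \<Rightarrow> real \<Rightarrow> real \<Rightarrow> real \<Rightarrow> real \<Rightarrow> real
    \<Rightarrow> (real \<Rightarrow> real) \<Rightarrow> (real \<Rightarrow> real) \<Rightarrow> bool" where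
  "in_A k a b c d M \<epsilon> \<alpha> S S' \<longleftrightarrow> in_S_class k a b c d \<alpha> S S' \<and> NS k a b S' < \<epsilon> \<and>
     (\<forall>j\<in>{1..k}. \<forall>x\<in>{a j..b j}. \<forall>y\<in>{a j..b j}.
        \<bar>ln (\<bar>S' x\<bar> / \<bar>S' y\<bar>)\<bar> \<le> M * \<bar>x - y\<bar> powr \<alpha>)"

definition CS :: "nat \<Rightarrow> (nat \<Rightarrow> real) \<Rightarrow> (nat \<Rightarrow> real) \<Rightarrow> (real \<Rightarrow> real) \<Rightarrow> real set" where
  "CS k a b S = {x \<in> Iset k a b. \<forall>n\<ge>1. (S ^^ n) x \<in> Iset k a b}"

definition phi :: "(nat \<Rightarrow> real) \<Rightarrow> (nat \<Rightarrow> real) \<Rightarrow> (real \<Rightarrow> real) \<Rightarrow> nat \<Rightarrow> real \<Rightarrow> real" where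
  "phi a b S i = the_inv_into {a i..b i} S"

definition phiw :: "(nat \<Rightarrow> real) \<Rightarrow> (nat \<Rightarrow> real) \<Rightarrow> (real \<Rightarrow> real) \<Rightarrow> nat list \<Rightarrow> real \<Rightarrow> real" where
  "phiw a b S ws = foldr (\<lambda>i f. phi a b S i \<circ> f) ws id"

definition gapJ :: "(nat \<Rightarrow> real) \<Rightarrow> (nat \<Rightarrow> real) \<Rightarrow> nat \<Rightarrow> real set" where
  "gapJ a b i = {b i<..<a (Suc i)}"

end

theory Submission
  imports Defs
begin

text \<open>If the nonlinearity of \<open>S\<close> is small compared with the room the intervals \<open>I\<^sub>j\<close> leave
  in \<open>L\<close>, every branch of \<open>S\<close> expands by a uniform factor \<open>1/r > 1\<close>. The inverse branches
  then contract by \<open>r\<close>, and the Hoelder bound on \<open>log |S'|\<close> gives all compositions \<open>\<phi>(w)\<close>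
  a distortion bounded independently of \<open>w\<close>, the errors forming a geometric series.
  Hence two points of \<open>T = \<phi>(j\<^sub>1,\<dots>,j\<^sub>m)(L)\<close> coming from a gap of level \<open>m + p\<close> are
  at most \<open>C r^p |T|\<close> apart, while \<open>F\<close>, of distortion below \<open>1/2\<close> and mapping all of \<open>T\<close>
  into \<open>L\<close>, stretches them by at most \<open>e^(1/2) |L| / |T|\<close>. Their images span a gap \<open>J\<^sub>j\<close>,
  whose length is bounded below, so \<open>r^p\<close> is bounded below.\<close>

lemma C1_on_mean_value:
  fixes F F' :: "real \<Rightarrow> real"
  assumes F: "C1_on T F F'" and T: "is_interval T" and x: "x \<in> T" and y: "y \<in> T"
  shows "\<exists>\<xi>. min x y \<le> \<xi> \<and> \<xi> \<le> max x y \<and> \<xi> \<in> T \<and> F y - F x = F' \<xi> * (y - x)"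
proof -
  have ordered: "\<exists>\<xi>\<in>{u..v}. F v - F u = F' \<xi> * (v - u)"
    if "u \<in> T" "v \<in> T" "u \<le> v" for u v
  proof -
    have sub: "{u..v} \<subseteq> T" using mem_is_interval_1_I[OF T that(1,2)] by auto
    have "(F has_derivative (*) (F' z)) (at z within {u..v})" if "z \<in> {u..v}" for z
      using F sub that unfolding C1_on_def has_field_derivative_def[symmetric]
      by (meson DERIV_subset subsetD)
    from mvt_very_simple[OF \<open>u \<le> v\<close>, of F "\<lambda>z. (*) (F' z)"] this show ?thesis by auto
  qed
  have between: "\<xi> \<in> T" if "min x y \<le> \<xi>" "\<xi> \<le> max x y" for \<xi>
    using mem_is_interval_1_I[OF T x y] mem_is_interval_1_I[OF T y x] that
    by (cases "x \<le> y") auto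
  show ?thesis
  proof (cases "x \<le> y")
    case True
    then show ?thesis using ordered[OF x y] between by fastforce
  next
    case False
    then obtain \<xi> where "\<xi> \<in> {y..x}" "F x - F y = F' \<xi> * (x - y)"
      using ordered[OF y x] by auto
    then show ?thesis using False between by (intro exI[of _ \<xi>]) (auto simp: algebra_simps)
  qed
qed

lemma ln_ratio_le_distortion:
  fixes g :: "real \<Rightarrow> real"
  assumes T: "compact T" and g: "continuous_on T g" "\<forall>x\<in>T. g x \<noteq> 0"
    and x: "x \<in> T" and y: "y \<in> T"
  shows "ln (\<bar>g x\<bar> / \<bar>g y\<bar>) \<le> distortion T g"
proof -
  have "continuous_on T (\<lambda>x. \<bar>g x\<bar>)" using g(1) by (intro continuous_intros)
  then obtain xmax xmin where "xmax \<in> T" "xmin \<in> T"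
    and max: "\<forall>z\<in>T. \<bar>g z\<bar> \<le> \<bar>g xmax\<bar>" and min: "\<forall>z\<in>T. \<bar>g xmin\<bar> \<le> \<bar>g z\<bar>"
    using continuous_attains_sup[OF T] continuous_attains_inf[OF T] x by blast
  then have min_pos: "0 < \<bar>g xmin\<bar>" using g(2) by auto
  define B where "B = ln (\<bar>g xmax\<bar> / \<bar>g xmin\<bar>)"
  have bound: "ln (\<bar>g u\<bar> / \<bar>g v\<bar>) \<le> B" if "u \<in> T" "v \<in> T" for u v
  proof -
    have "0 < \<bar>g u\<bar> / \<bar>g v\<bar>" using that g(2) by auto
    moreover have "\<bar>g u\<bar> / \<bar>g v\<bar> \<le> \<bar>g xmax\<bar> / \<bar>g xmin\<bar>"
      using that max min min_pos by (intro frac_le) auto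
    ultimately show ?thesis unfolding B_def by simp
  qed
  have inner: "(SUP v\<in>T. ln (\<bar>g u\<bar> / \<bar>g v\<bar>)) \<le> B" if "u \<in> T" for u
    using bound that x by (intro cSUP_least) auto
  have "ln (\<bar>g x\<bar> / \<bar>g y\<bar>) \<le> (SUP v\<in>T. ln (\<bar>g x\<bar> / \<bar>g v\<bar>))"
    using bound x y by (intro cSUP_upper) (auto intro!: bdd_aboveI2)
  also have "\<dots> \<le> distortion T g" unfolding distortion_def
    using inner x by (intro cSUP_upper) (auto intro!: bdd_aboveI2)
  finally show ?thesis .
qed

lemma abs_le_exp_distortion:
  fixes g :: "real \<Rightarrow> real"
  assumes "compact T" "continuous_on T g" "\<forall>x\<in>T. g x \<noteq> 0" "x \<in> T" "y \<in> T"
  shows "\<bar>g x\<bar> \<le> exp (distortion T g) * \<bar>g y\<bar>"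
proof -
  have pos: "0 < \<bar>g x\<bar>" "0 < \<bar>g y\<bar>" using assms(3-5) by auto
  have "\<bar>g x\<bar> / \<bar>g y\<bar> = exp (ln (\<bar>g x\<bar> / \<bar>g y\<bar>))" using pos by simp
  also have "\<dots> \<le> exp (distortion T g)" using ln_ratio_le_distortion[OF assms] by simp
  finally show ?thesis using pos by (simp add: divide_le_eq)
qed

lemma image_length_le_exp_distortion:
  fixes S S' :: "real \<Rightarrow> real"
  assumes S: "C1_on {u..v} S S'" "S ` {u..v} = {c..d}" "\<forall>y\<in>{u..v}. S' y \<noteq> 0"
    and x: "x \<in> {u..v}"
  shows "d - c \<le> exp (distortion {u..v} S') * \<bar>S' x\<bar> * (v - u)"
proof -
  have "S x \<in> {c..d}" using S(2) x by blast
  then have "c \<in> S ` {u..v}" "d \<in> S ` {u..v}" using S(2) by auto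
  then obtain y z where yz: "y \<in> {u..v}" "z \<in> {u..v}" "S y = c" "S z = d" by blast
  then obtain \<xi> where \<xi>: "\<xi> \<in> {u..v}" "d - c = S' \<xi> * (z - y)"
    using C1_on_mean_value[OF S(1) is_interval_cc yz(1,2)] by auto
  have ratio: "\<bar>S' \<xi>\<bar> \<le> exp (distortion {u..v} S') * \<bar>S' x\<bar>"
    using S(1,3) \<xi>(1) x by (intro abs_le_exp_distortion) (auto simp: C1_on_def)
  have "0 \<le> d - c" using \<open>S x \<in> {c..d}\<close> by auto
  then have "d - c = \<bar>S' \<xi>\<bar> * \<bar>z - y\<bar>" using \<xi>(2) by (metis abs_mult abs_of_nonneg)
  also have "\<dots> \<le> \<bar>S' \<xi>\<bar> * (v - u)"
    using yz(1,2) by (intro mult_left_mono) auto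
  also have "\<dots> \<le> exp (distortion {u..v} S') * \<bar>S' x\<bar> * (v - u)"
    using ratio x by (intro mult_right_mono) auto
  finally show ?thesis .
qed

lemma abs_diff_le_between:
  fixes x y A B C E r :: real
  assumes "min A B \<le> x" "x \<le> max A B" "min C E \<le> y" "y \<le> max C E"
    and "\<bar>A - C\<bar> \<le> r" "\<bar>A - E\<bar> \<le> r" "\<bar>B - C\<bar> \<le> r" "\<bar>B - E\<bar> \<le> r"
  shows "\<bar>x - y\<bar> \<le> r"
  using assms by (smt (verit))

lemma le_of_geometric_lower_bound:
  fixes r C J :: real
  assumes "0 \<le> C" "0 \<le> r" "r \<le> 1" "C * r ^ l < J" "J \<le> C * r ^ n"
  shows "n \<le> l"
proof (rule ccontr)
  assume "\<not> n \<le> l"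
  then have "C * r ^ n \<le> C * r ^ l" using assms(1-3) by (intro mult_left_mono power_decreasing) auto
  then show False using assms(4,5) by linarith
qed

lemma phiw_Nil [simp]: "phiw a b S [] x = x"
  by (simp add: phiw_def)

lemma phiw_Cons [simp]: "phiw a b S (i # w) x = phi a b S i (phiw a b S w x)"
  by (simp add: phiw_def)

lemma phiw_append: "phiw a b S (xs @ ys) x = phiw a b S xs (phiw a b S ys x)"
  by (induction xs) auto

lemma setting_interval_bounds:
  assumes "setting k a b c d" "j \<in> {1..k}"
  shows "c \<le> a j" "a j \<le> b j" "b j \<le> d"
proof -
  have "a j \<le> b j" "{a j..b j} \<subseteq> {c..d}" using assms unfolding setting_def by auto
  then show "c \<le> a j" "a j \<le> b j" "b j \<le> d" by auto
qed

lemma setting_gap: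
  assumes "setting k a b c d" "i \<in> {1..k-1}"
  shows "b i < a (Suc i)" "gapJ a b i \<subseteq> {c..d}"
proof -
  have "i \<in> {1..k}" "Suc i \<in> {1..k}" "i \<in> {1..<k}" using assms(2) by auto
  then have "c \<le> a i" "a i \<le> b i" "a (Suc i) \<le> b (Suc i)" "b (Suc i) \<le> d"
    and "b i < a (Suc i)"
    using assms(1) setting_interval_bounds[OF assms(1)] unfolding setting_def by auto
  then show "b i < a (Suc i)" "gapJ a b i \<subseteq> {c..d}" unfolding gapJ_def by auto
qed

lemma setting_width_less:
  assumes S: "setting k a b c d" and j: "j \<in> {1..k}"
  shows "b j - a j < d - c"
proof (cases "j < k")
  case True
  then have "j \<in> {1..k-1}" "Suc j \<in> {1..k}" using j by auto
  then have "b j < a (Suc j)" "a (Suc j) \<le> b (Suc j)" "b (Suc j) \<le> d" "c \<le> a j"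
    using setting_gap(1)[OF S] setting_interval_bounds[OF S] j by auto
  then show ?thesis by linarith
next
  case False
  have "k \<ge> 2" using S unfolding setting_def by simp
  then have "k - 1 \<in> {1..k-1}" "k - 1 \<in> {1..k}" "Suc (k - 1) = k" by auto
  then have "b (k - 1) < a k" "c \<le> a (k - 1)" "a (k - 1) \<le> b (k - 1)" "a k \<le> b k" "b k \<le> d"
    using setting_gap(1)[OF S] setting_interval_bounds[OF S] j by (metis, auto+)
  moreover have "j = k" using False j by auto
  ultimately show ?thesis by auto
qed

lemma setting_c_less_d:
  assumes "setting k a b c d" shows "c < d"
proof -
  have "1 \<in> {1..k}" using assms unfolding setting_def by auto
  then show ?thesis
    using setting_width_less[OF assms] setting_interval_bounds(2)[OF assms] by fastforce
qed

lemma setting_min_gap: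
  assumes "setting k a b c d"
  obtains J where "0 < J" "\<And>j. j \<in> {1..k-1} \<Longrightarrow> J \<le> a (Suc j) - b j"
proof
  show "0 < Min ((\<lambda>j. a (Suc j) - b j) ` {1..k-1})"
    using setting_gap(1)[OF assms] assms unfolding setting_def by auto
qed auto

lemma small_nonlinearity_uniform_expansion:
  assumes setting: "setting k a b c d"
  obtains \<epsilon>0 :: real where "\<epsilon>0 > 0"
    and "\<And>S S' j x. in_S_class k a b c d \<alpha> S S' \<Longrightarrow> NS k a b S' < \<epsilon>0 \<Longrightarrow>
           j \<in> {1..k} \<Longrightarrow> x \<in> {a j..b j} \<Longrightarrow> exp \<epsilon>0 \<le> \<bar>S' x\<bar>"
proof -
  have cd: "c < d" by (rule setting_c_less_d[OF setting])
  have "{1..k} \<noteq> {}" using setting unfolding setting_def by auto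
  define w where "w = max (Max ((\<lambda>j. b j - a j) ` {1..k})) ((d - c) / 2)"
  have w: "0 < w" "w < d - c"
    unfolding w_def using setting_width_less[OF setting] cd \<open>{1..k} \<noteq> {}\<close>
    by (auto simp: less_max_iff_disj)
  have width: "b j - a j \<le> w" if "j \<in> {1..k}" for j
    unfolding w_def using that by (auto intro!: max.coboundedI1)
  \<comment> \<open>Each branch is stretched by \<open>(d - c)/w = exp (2 \<epsilon>0)\<close> somewhere; distortion below
    \<open>\<epsilon>0\<close> leaves a factor \<open>exp \<epsilon>0\<close> everywhere. The maximum with \<open>(d - c)/2\<close> keeps \<open>w\<close>
    positive even when all \<open>I\<^sub>j\<close> are points.\<close>
  define \<epsilon>0 where "\<epsilon>0 = ln ((d - c) / w) / 2"
  have "\<epsilon>0 > 0" unfolding \<epsilon>0_def using w by simp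
  have scale: "exp \<epsilon>0 * exp \<epsilon>0 * w = d - c"
  proof -
    have "exp \<epsilon>0 * exp \<epsilon>0 = (d - c) / w" unfolding \<epsilon>0_def using w by (simp flip: exp_add)
    then show ?thesis using w by simp
  qed
  show thesis
  proof (rule that[OF \<open>\<epsilon>0 > 0\<close>])
    fix S S' j x
    assume S: "in_S_class k a b c d \<alpha> S S'" and small: "NS k a b S' < \<epsilon>0"
      and j: "j \<in> {1..k}" and x: "x \<in> {a j..b j}"
    have C1: "C1_on {a j..b j} S S'" and onto: "S ` {a j..b j} = {c..d}"
      using S j unfolding in_S_class_def by auto
    have "\<forall>y\<in>{a j..b j}. 1 < \<bar>S' y\<bar>"
      using S j unfolding in_S_class_def Iset_def by blast
    then have nonzero: "\<forall>y\<in>{a j..b j}. S' y \<noteq> 0" by fastforce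
    have "distortion {a j..b j} S' \<le> NS k a b S'"
      unfolding NS_def using j by (intro Max_ge) auto
    then have "exp (distortion {a j..b j} S') \<le> exp \<epsilon>0" using small by simp
    have "exp \<epsilon>0 * exp \<epsilon>0 * w = d - c" by (rule scale)
    also have "\<dots> \<le> exp (distortion {a j..b j} S') * \<bar>S' x\<bar> * (b j - a j)"
      by (rule image_length_le_exp_distortion[OF C1 onto nonzero x])
    also have "\<dots> \<le> exp \<epsilon>0 * \<bar>S' x\<bar> * w"
      using \<open>exp (distortion {a j..b j} S') \<le> exp \<epsilon>0\<close> width[OF j] x
      by (intro mult_mono) auto
    finally show "exp \<epsilon>0 \<le> \<bar>S' x\<bar>" using w by simp
  qed
qed

locale expanding_branches =
  fixes k :: nat and a b :: "nat \<Rightarrow> real" and c d M \<alpha> r :: real and S S' :: "real \<Rightarrow> real"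
  assumes setting: "setting k a b c d"
    and C1: "\<And>j. j \<in> {1..k} \<Longrightarrow> C1_on {a j..b j} S S'"
    and onto: "\<And>j. j \<in> {1..k} \<Longrightarrow> S ` {a j..b j} = {c..d}"
    and expanding: "\<And>j x. j \<in> {1..k} \<Longrightarrow> x \<in> {a j..b j} \<Longrightarrow> 1 \<le> r * \<bar>S' x\<bar>"
    and r: "0 < r" "r < 1"
    and log_holder: "\<And>j x y. j \<in> {1..k} \<Longrightarrow> x \<in> {a j..b j} \<Longrightarrow> y \<in> {a j..b j} \<Longrightarrow>
        \<bar>ln (\<bar>S' x\<bar> / \<bar>S' y\<bar>)\<bar> \<le> M * \<bar>x - y\<bar> powr \<alpha>"
    and M: "0 \<le> M" and \<alpha>: "0 < \<alpha>"
begin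

lemma c_less_d: "c < d"
  by (rule setting_c_less_d[OF setting])

lemma branch_subset: "j \<in> {1..k} \<Longrightarrow> {a j..b j} \<subseteq> {c..d}"
  using setting_interval_bounds[OF setting] by fastforce

lemma derivative_nonzero: "j \<in> {1..k} \<Longrightarrow> x \<in> {a j..b j} \<Longrightarrow> S' x \<noteq> 0"
  using expanding by fastforce

lemma derivative_ratio_le:
  assumes j: "j \<in> {1..k}" and x: "x \<in> {a j..b j}" and y: "y \<in> {a j..b j}"
    and close: "\<bar>x - y\<bar> \<le> r ^ n * (d - c)"
  shows "\<bar>S' y\<bar> \<le> exp (M * (d - c) powr \<alpha> * (r powr \<alpha>) ^ n) * \<bar>S' x\<bar>"
proof -
  have pos: "0 < \<bar>S' x\<bar>" "0 < \<bar>S' y\<bar>" using derivative_nonzero j x y by auto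
  have "\<bar>x - y\<bar> powr \<alpha> \<le> (r ^ n * (d - c)) powr \<alpha>" using close \<alpha> by (intro powr_mono2) auto
  also have "\<dots> = (d - c) powr \<alpha> * (r powr \<alpha>) ^ n"
    using r c_less_d by (simp add: powr_mult powr_realpow[symmetric] powr_powr mult.commute
        flip: powr_power)
  finally have "M * \<bar>x - y\<bar> powr \<alpha> \<le> M * (d - c) powr \<alpha> * (r powr \<alpha>) ^ n"
    using M by (simp add: mult.assoc mult_left_mono)
  moreover have "ln (\<bar>S' y\<bar> / \<bar>S' x\<bar>) \<le> M * \<bar>x - y\<bar> powr \<alpha>"
    using log_holder[OF j y x] by (simp add: abs_minus_commute)
  ultimately have "exp (ln (\<bar>S' y\<bar> / \<bar>S' x\<bar>)) \<le> exp (M * (d - c) powr \<alpha> * (r powr \<alpha>) ^ n)"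
    by simp
  then have "\<bar>S' y\<bar> / \<bar>S' x\<bar> \<le> exp (M * (d - c) powr \<alpha> * (r powr \<alpha>) ^ n)"
    using pos by simp
  then show ?thesis using pos by (simp add: divide_le_eq)
qed

lemma mean_value:
  assumes "j \<in> {1..k}" "x \<in> {a j..b j}" "y \<in> {a j..b j}"
  shows "\<exists>\<xi>. min x y \<le> \<xi> \<and> \<xi> \<le> max x y \<and> \<xi> \<in> {a j..b j} \<and> S y - S x = S' \<xi> * (y - x)"
  using C1_on_mean_value[OF C1 is_interval_cc] assms by blast

lemma inj_on_branch: "j \<in> {1..k} \<Longrightarrow> inj_on S {a j..b j}"
  by (rule inj_onI) (use mean_value derivative_nonzero in fastforce)

lemma phi_mem: "j \<in> {1..k} \<Longrightarrow> y \<in> {c..d} \<Longrightarrow> phi a b S j y \<in> {a j..b j}"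
  unfolding phi_def using onto inj_on_branch by (metis the_inv_into_into order_refl)

lemma S_phi: "j \<in> {1..k} \<Longrightarrow> y \<in> {c..d} \<Longrightarrow> S (phi a b S j y) = y"
  unfolding phi_def using onto inj_on_branch by (metis f_the_inv_into_f)

lemma phi_contraction:
  assumes j: "j \<in> {1..k}" and p: "p \<in> {c..d}" and q: "q \<in> {c..d}"
  shows "\<bar>phi a b S j p - phi a b S j q\<bar> \<le> r * \<bar>p - q\<bar>"
proof -
  let ?x = "phi a b S j p" and ?y = "phi a b S j q"
  obtain \<xi> where \<xi>: "\<xi> \<in> {a j..b j}" "S ?x - S ?y = S' \<xi> * (?x - ?y)"
    using mean_value[OF j phi_mem[OF j q] phi_mem[OF j p]] by blast
  have "p - q = S' \<xi> * (?x - ?y)" using \<xi>(2) S_phi j p q by simp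
  then have scaled: "r * \<bar>p - q\<bar> = (r * \<bar>S' \<xi>\<bar>) * \<bar>?x - ?y\<bar>" by (simp add: abs_mult)
  have "1 * \<bar>?x - ?y\<bar> \<le> (r * \<bar>S' \<xi>\<bar>) * \<bar>?x - ?y\<bar>"
    using expanding[OF j \<xi>(1)] by (rule mult_right_mono) simp
  then show ?thesis unfolding scaled[symmetric] by simp
qed

lemma phiw_mem: "set w \<subseteq> {1..k} \<Longrightarrow> p \<in> {c..d} \<Longrightarrow> phiw a b S w p \<in> {c..d}"
  by (induction w) (use phi_mem branch_subset in fastforce)+

lemma phiw_contraction:
  "set w \<subseteq> {1..k} \<Longrightarrow> p \<in> {c..d} \<Longrightarrow> q \<in> {c..d} \<Longrightarrow>
    \<bar>phiw a b S w p - phiw a b S w q\<bar> \<le> r ^ length w * \<bar>p - q\<bar>"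
proof (induction w)
  case (Cons i w)
  then have "\<bar>phiw a b S (i # w) p - phiw a b S (i # w) q\<bar>
      \<le> r * \<bar>phiw a b S w p - phiw a b S w q\<bar>"
    using phi_contraction phiw_mem by simp
  also have "\<dots> \<le> r * (r ^ length w * \<bar>p - q\<bar>)" using Cons r by (intro mult_left_mono) auto
  finally show ?case by simp
qed simp

lemma phiw_diameter:
  assumes "set w \<subseteq> {1..k}" "p \<in> {c..d}" "q \<in> {c..d}"
  shows "\<bar>phiw a b S w p - phiw a b S w q\<bar> \<le> r ^ length w * (d - c)"
proof -
  have "\<bar>p - q\<bar> \<le> d - c" using assms(2,3) by auto
  then show ?thesis using phiw_contraction[OF assms] r by (smt (verit) mult_left_mono zero_le_power)
qed

lemma continuous_on_phiw:
  assumes "set w \<subseteq> {1..k}"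
  shows "continuous_on {c..d} (phiw a b S w)"
proof (rule lipschitz_on_continuous_on)
  show "(r ^ length w)-lipschitz_on {c..d} (phiw a b S w)"
    using phiw_contraction[OF assms] r by (intro lipschitz_onI) (auto simp: dist_real_def)
qed

text \<open>The \<open>t\<close>-th summand bounds the Hoelder error of the branch applied after \<open>t\<close> others,
  whose arguments lie in an interval of length at most \<open>r^(t+1) (d - c)\<close>.\<close>
definition distortion_const :: "nat \<Rightarrow> real" where
  "distortion_const n = M * (d - c) powr \<alpha> * (\<Sum>t<n. (r powr \<alpha>) ^ (t + 1))"

lemma distortion_const_Suc:
  "distortion_const (Suc n) = distortion_const n + M * (d - c) powr \<alpha> * (r powr \<alpha>) ^ Suc n"
  unfolding distortion_const_def by (simp add: algebra_simps)

lemma distortion_const_le: "distortion_const n \<le> M * (d - c) powr \<alpha> / (1 - r powr \<alpha>)"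
proof -
  have q: "0 \<le> r powr \<alpha>" "r powr \<alpha> < 1"
    using r \<alpha> powr_less_mono2[of \<alpha> r 1] by auto
  have "(\<Sum>t<n. (r powr \<alpha>) ^ (t + 1)) \<le> (\<Sum>t<n. (r powr \<alpha>) ^ t)"
    using q by (intro sum_mono) (auto intro!: mult_left_le_one_le)
  also have "\<dots> = (1 - (r powr \<alpha>) ^ n) / (1 - r powr \<alpha>)" using q by (simp add: sum_gp_strict)
  also have "\<dots> \<le> 1 / (1 - r powr \<alpha>)" using q by (intro divide_right_mono) auto
  finally have "M * (d - c) powr \<alpha> * (\<Sum>t<n. (r powr \<alpha>) ^ (t + 1))
      \<le> M * (d - c) powr \<alpha> * (1 / (1 - r powr \<alpha>))"
    using M by (intro mult_left_mono) auto
  then show ?thesis unfolding distortion_const_def by simp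
qed

lemma phiw_bounded_distortion:
  assumes "set w \<subseteq> {1..k}" "p \<in> {c..d}" "q \<in> {c..d}" "u \<in> {c..d}" "v \<in> {c..d}"
  shows "\<bar>phiw a b S w p - phiw a b S w q\<bar> * \<bar>v - u\<bar>
    \<le> exp (distortion_const (length w)) * \<bar>p - q\<bar> * \<bar>phiw a b S w v - phiw a b S w u\<bar>"
  using assms
proof (induction w)
  case Nil
  then show ?case by (simp add: distortion_const_def)
next
  case (Cons i w)
  let ?f = "phiw a b S w" and ?g = "phi a b S i" and ?D = "distortion_const (length w)"
  have i: "i \<in> {1..k}" and w: "set w \<subseteq> {1..k}" using Cons.prems by auto
  have f: "?f p \<in> {c..d}" "?f q \<in> {c..d}" "?f u \<in> {c..d}" "?f v \<in> {c..d}"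
    using phiw_mem[OF w] Cons.prems by auto
  obtain \<xi> where \<xi>: "min (?g (?f q)) (?g (?f p)) \<le> \<xi>" "\<xi> \<le> max (?g (?f q)) (?g (?f p))"
      "\<xi> \<in> {a i..b i}" "S (?g (?f p)) - S (?g (?f q)) = S' \<xi> * (?g (?f p) - ?g (?f q))"
    using mean_value[OF i phi_mem[OF i f(2)] phi_mem[OF i f(1)]] by blast
  obtain \<eta> where \<eta>: "min (?g (?f u)) (?g (?f v)) \<le> \<eta>" "\<eta> \<le> max (?g (?f u)) (?g (?f v))"
      "\<eta> \<in> {a i..b i}" "S (?g (?f v)) - S (?g (?f u)) = S' \<eta> * (?g (?f v) - ?g (?f u))"
    using mean_value[OF i phi_mem[OF i f(3)] phi_mem[OF i f(4)]] by blast
  define h where "h = M * (d - c) powr \<alpha> * (r powr \<alpha>) ^ Suc (length w)"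
  have "\<bar>\<xi> - \<eta>\<bar> \<le> r ^ Suc (length w) * (d - c)"
    using abs_diff_le_between[OF \<xi>(1,2) \<eta>(1,2)] phiw_diameter[of "i # w"] Cons.prems by simp
  then have ratio: "\<bar>S' \<eta>\<bar> \<le> exp h * \<bar>S' \<xi>\<bar>"
    unfolding h_def by (rule derivative_ratio_le[OF i \<xi>(3) \<eta>(3)])
  have "\<bar>?g (?f p) - ?g (?f q)\<bar> * \<bar>v - u\<bar> * \<bar>S' \<xi>\<bar> = \<bar>?f p - ?f q\<bar> * \<bar>v - u\<bar>"
    using \<xi>(4) S_phi[OF i] f by (simp add: abs_mult)
  also have "\<dots> \<le> exp ?D * \<bar>p - q\<bar> * \<bar>?f v - ?f u\<bar>"
    using Cons.IH[OF w] Cons.prems by simp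
  also have "\<dots> = exp ?D * \<bar>p - q\<bar> * \<bar>?g (?f v) - ?g (?f u)\<bar> * \<bar>S' \<eta>\<bar>"
    using \<eta>(4) S_phi[OF i] f by (simp add: abs_mult)
  also have "\<dots> \<le> exp ?D * \<bar>p - q\<bar> * \<bar>?g (?f v) - ?g (?f u)\<bar> * (exp h * \<bar>S' \<xi>\<bar>)"
    using ratio by (intro mult_left_mono) auto
  also have "\<dots> = exp (distortion_const (length (i # w))) * \<bar>p - q\<bar>
      * \<bar>?g (?f v) - ?g (?f u)\<bar> * \<bar>S' \<xi>\<bar>"
    by (simp add: h_def distortion_const_Suc exp_add)
  finally show ?case using derivative_nonzero[OF i \<xi>(3)] by simp
qed

lemma image_oscillation_le:
  assumes js: "set js \<subseteq> {1..k}" and ps: "set ps \<subseteq> {1..k}"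
    and F: "C1_on (phiw a b S js ` {c..d}) F F'" "F ` phiw a b S js ` {c..d} \<subseteq> {c..d}"
      "\<forall>x\<in>phiw a b S js ` {c..d}. F' x \<noteq> 0" "distortion (phiw a b S js ` {c..d}) F' \<le> \<delta>"
    and x: "x \<in> {c..d}" and y: "y \<in> {c..d}"
  shows "\<bar>F (phiw a b S (js @ ps) y) - F (phiw a b S (js @ ps) x)\<bar>
    \<le> exp (\<delta> + distortion_const (length js)) * r ^ length ps * (d - c)"
proof -
  define f where "f = phiw a b S js"
  define T where "T = f ` {c..d}"
  define D where "D = distortion_const (length js)"
  have cont: "continuous_on {c..d} f" unfolding f_def by (rule continuous_on_phiw[OF js])
  have T: "is_interval T" "compact T" unfolding T_def is_interval_connected_1
    using connected_continuous_image[OF cont] compact_continuous_image[OF cont] by auto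
  define p q where "p = phiw a b S ps x" and "q = phiw a b S ps y"
  have pq: "p \<in> {c..d}" "q \<in> {c..d}" unfolding p_def q_def using phiw_mem[OF ps] x y by auto
  have fT: "f p \<in> T" "f q \<in> T" "f c \<in> T" "f d \<in> T" using pq c_less_d unfolding T_def by auto
  have F1: "C1_on T F F'" using F(1) unfolding T_def f_def .
  obtain \<xi> where \<xi>: "\<xi> \<in> T" "F (f q) - F (f p) = F' \<xi> * (f q - f p)"
    using C1_on_mean_value[OF F1 T(1) fT(1,2)] by blast
  obtain \<eta> where \<eta>: "\<eta> \<in> T" "F (f d) - F (f c) = F' \<eta> * (f d - f c)"
    using C1_on_mean_value[OF F1 T(1) fT(3,4)] by blast
  have "\<bar>F' \<xi>\<bar> \<le> exp (distortion T F') * \<bar>F' \<eta>\<bar>"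
    using F1 F(3) \<xi>(1) \<eta>(1) T(2) unfolding C1_on_def T_def f_def
    by (intro abs_le_exp_distortion) auto
  also have "\<dots> \<le> exp \<delta> * \<bar>F' \<eta>\<bar>" using F(4) unfolding T_def f_def by (intro mult_right_mono) auto
  finally have ratio: "\<bar>F' \<xi>\<bar> \<le> exp \<delta> * \<bar>F' \<eta>\<bar>" .
  have "\<bar>F (f q) - F (f p)\<bar> * (d - c) = \<bar>F' \<xi>\<bar> * (\<bar>f q - f p\<bar> * \<bar>d - c\<bar>)"
    using \<xi>(2) c_less_d by (simp add: abs_mult)
  also have "\<dots> \<le> \<bar>F' \<xi>\<bar> * (exp D * \<bar>q - p\<bar> * \<bar>f d - f c\<bar>)"
    using phiw_bounded_distortion[OF js pq(2,1), of c d] c_less_d unfolding f_def D_def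
    by (intro mult_left_mono) auto
  also have "\<dots> \<le> (exp \<delta> * \<bar>F' \<eta>\<bar>) * (exp D * (r ^ length ps * (d - c)) * \<bar>f d - f c\<bar>)"
    using ratio phiw_diameter[OF ps y x] unfolding p_def q_def
    by (intro mult_mono) (auto intro!: mult_right_mono mult_left_mono)
  also have "\<dots> = exp (\<delta> + D) * r ^ length ps * (d - c) * \<bar>F (f d) - F (f c)\<bar>"
    using \<eta>(2) by (simp add: abs_mult exp_add mult_ac)
  also have "\<dots> \<le> exp (\<delta> + D) * r ^ length ps * (d - c) * (d - c)"
  proof -
    have "F (f c) \<in> {c..d}" "F (f d) \<in> {c..d}" using F(2) fT(3,4) unfolding T_def f_def by blast+
    then show ?thesis using c_less_d r by (intro mult_left_mono) auto
  qed
  finally show ?thesis using c_less_d unfolding p_def q_def f_def D_def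
    by (simp add: phiw_append)
qed

lemma gap_length_le:
  assumes js: "set js \<subseteq> {1..k}" and ps: "set ps \<subseteq> {1..k}"
    and F: "C1_on (phiw a b S js ` {c..d}) F F'" "F ` phiw a b S js ` {c..d} \<subseteq> {c..d}"
      "\<forall>x\<in>phiw a b S js ` {c..d}. F' x \<noteq> 0" "distortion (phiw a b S js ` {c..d}) F' \<le> \<delta>"
    and i: "i \<in> {1..k-1}" and j: "j \<in> {1..k-1}"
    and gap: "F ` phiw a b S (js @ ps) ` gapJ a b i = gapJ a b j"
  shows "a (Suc j) - b j \<le> 2 * exp (\<delta> + distortion_const (length js)) * r ^ length ps * (d - c)"
proof -
  define t1 t2 where "t1 = (3 * b j + a (Suc j)) / 4" and "t2 = (b j + 3 * a (Suc j)) / 4"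
  have "t1 \<in> gapJ a b j" "t2 \<in> gapJ a b j"
    using setting_gap(1)[OF setting j] unfolding gapJ_def t1_def t2_def by auto
  then obtain x y where xy: "x \<in> gapJ a b i" "y \<in> gapJ a b i"
    "F (phiw a b S (js @ ps) x) = t1" "F (phiw a b S (js @ ps) y) = t2"
    unfolding gap[symmetric] by blast
  define E where "E = exp (\<delta> + distortion_const (length js)) * r ^ length ps * (d - c)"
  have "\<bar>t2 - t1\<bar> \<le> E"
    using xy image_oscillation_le[OF js ps F] setting_gap(2)[OF setting i] unfolding E_def by blast
  have "a (Suc j) - b j = 2 * (t2 - t1)" unfolding t1_def t2_def by (simp add: field_simps)
  also have "\<dots> \<le> 2 * E" using abs_le_D1[OF \<open>\<bar>t2 - t1\<bar> \<le> E\<close>] by simp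
  finally show ?thesis unfolding E_def by (simp add: mult.assoc)
qed

end

lemma small_nonlinearity_expanding_branches:
  assumes setting: "setting k a b c d" and "0 \<le> M" "0 < \<alpha>"
  obtains \<epsilon>0 :: real where "\<epsilon>0 > 0"
    and "\<And>\<epsilon> S S'. \<epsilon> < \<epsilon>0 \<Longrightarrow> in_A k a b c d M \<epsilon> \<alpha> S S' \<Longrightarrow>
           expanding_branches k a b c d M \<alpha> (exp (- \<epsilon>0)) S S'"
proof -
  obtain \<epsilon>0 where "\<epsilon>0 > 0" and expansion: "\<And>S S' j x. in_S_class k a b c d \<alpha> S S' \<Longrightarrow>
      NS k a b S' < \<epsilon>0 \<Longrightarrow> j \<in> {1..k} \<Longrightarrow> x \<in> {a j..b j} \<Longrightarrow> exp \<epsilon>0 \<le> \<bar>S' x\<bar>"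
    using small_nonlinearity_uniform_expansion[OF setting] by blast
  show thesis
  proof (rule that[OF \<open>\<epsilon>0 > 0\<close>])
    fix \<epsilon> S S' assume "\<epsilon> < \<epsilon>0" and A: "in_A k a b c d M \<epsilon> \<alpha> S S'"
    then have S: "in_S_class k a b c d \<alpha> S S'" and "NS k a b S' < \<epsilon>0"
      unfolding in_A_def by auto
    show "expanding_branches k a b c d M \<alpha> (exp (- \<epsilon>0)) S S'"
    proof
      fix j x assume "j \<in> {1..k}" "x \<in> {a j..b j}"
      then have "exp (- \<epsilon>0) * exp \<epsilon>0 \<le> exp (- \<epsilon>0) * \<bar>S' x\<bar>"
        using expansion[OF S \<open>NS k a b S' < \<epsilon>0\<close>] by simp
      then show "1 \<le> exp (- \<epsilon>0) * \<bar>S' x\<bar>" by (simp flip: exp_add)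
    qed (use assms A \<open>\<epsilon>0 > 0\<close> in \<open>auto simp: in_A_def in_S_class_def\<close>)
  qed
qed

theorem lemma3:
  fixes k :: nat and a b :: "nat \<Rightarrow> real" and c d M \<alpha> :: real
  assumes "setting k a b c d" and "M > 0" and "\<alpha> > 0"
  shows "\<exists>\<epsilon>0>0. \<exists>l::nat. \<forall>\<epsilon> S S' js ps i j F F'.
     \<epsilon> < \<epsilon>0 \<and> in_A k a b c d M \<epsilon> \<alpha> S S' \<and>
     set js \<subseteq> {1..k} \<and> set ps \<subseteq> {1..k} \<and> i \<in> {1..k-1} \<and> j \<in> {1..k-1} \<and>
     C1_on (phiw a b S js ` {c..d}) F F' \<and> F ` (phiw a b S js ` {c..d}) \<subseteq> {c..d} \<and>
     (\<forall>x\<in>phiw a b S js ` {c..d}. F' x \<noteq> 0) \<and>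
     distortion (phiw a b S js ` {c..d}) F' < 1/2 \<and>
     (\<forall>U\<in>components (phiw a b S js ` {c..d} - CS k a b S).
        F ` U \<in> components ({c..d} - CS k a b S)) \<and>
     phiw a b S (js @ ps) ` gapJ a b i \<subseteq> phiw a b S js ` {c..d} \<and>
     F ` (phiw a b S (js @ ps) ` gapJ a b i) = gapJ a b j
     \<longrightarrow> length ps \<le> l"
proof -
  obtain \<epsilon>0 where "\<epsilon>0 > 0" and branches: "\<And>\<epsilon> S S'. \<epsilon> < \<epsilon>0 \<Longrightarrow>
      in_A k a b c d M \<epsilon> \<alpha> S S' \<Longrightarrow> expanding_branches k a b c d M \<alpha> (exp (- \<epsilon>0)) S S'"
    using small_nonlinearity_expanding_branches[OF assms(1) less_imp_le[OF assms(2)] assms(3)]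
    by blast
  obtain J where "0 < J" and gap_ge: "\<And>j. j \<in> {1..k-1} \<Longrightarrow> J \<le> a (Suc j) - b j"
    using setting_min_gap[OF assms(1)] by blast
  define r where "r = exp (- \<epsilon>0)"
  define D where "D = M * (d - c) powr \<alpha> / (1 - r powr \<alpha>)"
  define C where "C = 2 * exp (1/2 + D) * (d - c)"
  have "0 < C" unfolding C_def using setting_c_less_d[OF assms(1)] by simp
  obtain l where "r ^ l < J / C"
    using real_arch_pow_inv[of "J / C" r] \<open>0 < J\<close> \<open>0 < C\<close> \<open>\<epsilon>0 > 0\<close> unfolding r_def by auto
  then have l: "C * r ^ l < J" using \<open>0 < C\<close> by (simp add: pos_less_divide_eq mult.commute)
  show ?thesis
  proof (intro exI[of _ \<epsilon>0] conjI exI[of _ l] allI impI \<open>\<epsilon>0 > 0\<close>)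
    fix \<epsilon> S S' js ps i j F F'
    assume H: "\<epsilon> < \<epsilon>0 \<and> in_A k a b c d M \<epsilon> \<alpha> S S' \<and>
     set js \<subseteq> {1..k} \<and> set ps \<subseteq> {1..k} \<and> i \<in> {1..k-1} \<and> j \<in> {1..k-1} \<and>
     C1_on (phiw a b S js ` {c..d}) F F' \<and> F ` (phiw a b S js ` {c..d}) \<subseteq> {c..d} \<and>
     (\<forall>x\<in>phiw a b S js ` {c..d}. F' x \<noteq> 0) \<and>
     distortion (phiw a b S js ` {c..d}) F' < 1/2 \<and>
     (\<forall>U\<in>components (phiw a b S js ` {c..d} - CS k a b S).
        F ` U \<in> components ({c..d} - CS k a b S)) \<and>
     phiw a b S (js @ ps) ` gapJ a b i \<subseteq> phiw a b S js ` {c..d} \<and>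
     F ` (phiw a b S (js @ ps) ` gapJ a b i) = gapJ a b j"
    then have words: "set js \<subseteq> {1..k}" "set ps \<subseteq> {1..k}" and ij: "i \<in> {1..k-1}" "j \<in> {1..k-1}"
      and F: "C1_on (phiw a b S js ` {c..d}) F F'" "F ` phiw a b S js ` {c..d} \<subseteq> {c..d}"
        "\<forall>x\<in>phiw a b S js ` {c..d}. F' x \<noteq> 0" "distortion (phiw a b S js ` {c..d}) F' < 1/2"
      and gap: "F ` phiw a b S (js @ ps) ` gapJ a b i = gapJ a b j"
      by simp_all
    interpret expanding_branches k a b c d M \<alpha> r S S'
      unfolding r_def using H by (intro branches[of \<epsilon>]) simp_all
    have "J \<le> a (Suc j) - b j" using gap_ge ij by blast
    also have "\<dots> \<le> 2 * exp (1/2 + distortion_const (length js)) * r ^ length ps * (d - c)"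
      by (rule gap_length_le[OF words F(1-3) less_imp_le[OF F(4)] ij gap])
    also have "\<dots> \<le> 2 * exp (1/2 + D) * r ^ length ps * (d - c)"
      unfolding D_def using distortion_const_le c_less_d r
      by (intro mult_right_mono mult_left_mono) auto
    finally have "J \<le> C * r ^ length ps" unfolding C_def by (simp add: mult_ac)
    then show "length ps \<le> l"
      using le_of_geometric_lower_bound[OF less_imp_le[OF \<open>0 < C\<close>] _ _ l] r by simp
  qed
qed

end
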